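(* Let $Y$ be a complete CAT$(0)$ space, let $C_1, C_2 \subseteq Y$ be nonempty, closed and convex, and let $r_1,r_2>0$. If there exists $z \in Y$ such that $C_1, C_2 \subseteq B(z,r_1)$, then for any $x \in B(z,r_2)$, \[d(P_{C_1}(x), P_{C_2}(x))^2 \le 2(r_1 + r_2)H(C_1,C_2).\]
   Context: A CAT$(0)$ space is a geodesic space in which every geodesic triangle is no fatter than its Euclidean comparison triangle. A subset is convex if it contains every geodesic segment joining two of its points. $B(z,r)$ is the closed ball. For nonempty closed convex $C$ in a complete CAT$(0)$ space, $P_C(x)$ denotes the unique point of $C$ nearest to $x$ (metric projection). $H(B,C)=\max\{\sup_{b\in B}\mathrm{dist}(b,C),\sup_{c\in C}\mathrm{dist}(c,B)\}$ is the Pompeiu–Hausdorff distance. *)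

theory Defs
  imports "HOL-Analysis.Analysis"
begin

definition geodesic_path :: "'a::metric_space \<Rightarrow> 'a \<Rightarrow> (real \<Rightarrow> 'a) \<Rightarrow> bool" where
  "geodesic_path x y g \<longleftrightarrow> g 0 = x \<and> g 1 = y \<and>
     (\<forall>s\<in>{0..1}. \<forall>t\<in>{0..1}. dist (g s) (g t) = \<bar>s - t\<bar> * dist x y)"

definition geodesic_space :: "'a::metric_space itself \<Rightarrow> bool" where
  "geodesic_space TYPE('a) \<longleftrightarrow> (\<forall>x y::'a. \<exists>g. geodesic_path x y g)"

text \<open>Linear parametrisation of the side [a,b] of a Euclidean triangle in the plane (complex numbers).\<close>
definition lin_path :: "complex \<Rightarrow> complex \<Rightarrow> real \<Rightarrow> complex" where
  "lin_path a b s = (1 - of_real s) * a + of_real s * b"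

definition tri_side :: "'b \<Rightarrow> 'b \<Rightarrow> 'b \<Rightarrow> nat \<Rightarrow> 'b" where
  "tri_side u v w i = (if i = 0 then u else if i = 1 then v else w)"

definition CAT0 :: "'a::metric_space itself \<Rightarrow> bool" where
  "CAT0 TYPE('a) \<longleftrightarrow> geodesic_space TYPE('a) \<and>
    (\<forall>(p::'a) q r g1 g2 g3 (a::complex) b c.
       geodesic_path p q g1 \<and> geodesic_path q r g2 \<and> geodesic_path r p g3 \<and>
       dist a b = dist p q \<and> dist b c = dist q r \<and> dist c a = dist r p \<longrightarrow>
       (\<forall>i<3. \<forall>j<3. \<forall>s\<in>{0..1}. \<forall>t\<in>{0..1}.
          dist (tri_side g1 g2 g3 i s) (tri_side g1 g2 g3 j t)
            \<le> dist (tri_side (lin_path a b) (lin_path b c) (lin_path c a) i s)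
                   (tri_side (lin_path a b) (lin_path b c) (lin_path c a) j t)))"

definition geo_convex :: "'a::metric_space set \<Rightarrow> bool" where
  "geo_convex C \<longleftrightarrow> (\<forall>x\<in>C. \<forall>y\<in>C. \<forall>g. geodesic_path x y g \<longrightarrow> g ` {0..1} \<subseteq> C)"

definition metric_proj :: "'a::metric_space set \<Rightarrow> 'a \<Rightarrow> 'a" where
  "metric_proj C x = (THE p. p \<in> C \<and> (\<forall>c\<in>C. dist x p \<le> dist x c))"

text \<open>Pompeiu--Hausdorff distance (used for nonempty bounded sets).\<close>
definition pompeiu_hausdorff :: "'a::metric_space set \<Rightarrow> 'a set \<Rightarrow> real" where
  "pompeiu_hausdorff B C = max (SUP b\<in>B. infdist b C) (SUP c\<in>C. infdist c B)"

end

theory Submission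
  imports Defs
begin

text \<open>Comparing with Euclidean triangles gives the CN inequality and the contraction of geodesics
  issuing from a common point. The CN inequality at midpoints makes minimising sequences into a
  closed convex set Cauchy, so nearest points exist, and it also makes them unique. Moving the
  nearest point \<open>p\<close> of \<open>x\<close> in \<open>C\<close> a little towards a point of \<open>C\<close> near \<open>y\<close> and differentiating
  at time 0 yields \<open>d(p,y)\<^sup>2 \<le> d(x,y)\<^sup>2 - d(x,p)\<^sup>2 + 2 d(x,p) infdist y C\<close>. Adding this inequality
  for the two projections \<open>p\<^sub>1, p\<^sub>2\<close> of \<open>x\<close> gives
  \<open>d(p\<^sub>1,p\<^sub>2)\<^sup>2 \<le> d(x,p\<^sub>1) infdist p\<^sub>2 C\<^sub>1 + d(x,p\<^sub>2) infdist p\<^sub>1 C\<^sub>2\<close>, and each factor is bounded by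
  \<open>r\<^sub>1 + r\<^sub>2\<close> or by the Pompeiu--Hausdorff distance.\<close>

lemma norm_scaleR_combination_squared:
  fixes u v :: "'b::real_inner"
  shows "(norm ((1 - t) *\<^sub>R u + t *\<^sub>R v))\<^sup>2
           = (1 - t) * (norm u)\<^sup>2 + t * (norm v)\<^sup>2 - t * (1 - t) * (norm (u - v))\<^sup>2"
  unfolding power2_norm_eq_inner
  by (simp add: inner_add_left inner_add_right inner_diff_left inner_diff_right inner_commute
      algebra_simps)

lemma complex_triangle_exists:
  fixes \<alpha> \<beta> \<gamma> :: real
  assumes "0 \<le> \<alpha>" "0 \<le> \<gamma>" "\<beta> \<le> \<alpha> + \<gamma>" "\<alpha> \<le> \<beta> + \<gamma>" "\<gamma> \<le> \<alpha> + \<beta>"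
  shows "\<exists>a b c :: complex. dist a b = \<alpha> \<and> dist b c = \<beta> \<and> dist c a = \<gamma>"
proof -
  define u where "u = (\<alpha>\<^sup>2 + \<gamma>\<^sup>2 - \<beta>\<^sup>2) / (2 * \<alpha>)"
  have "0 \<le> \<beta>" "\<bar>\<alpha> - \<gamma>\<bar> \<le> \<beta>"
    using assms by linarith+
  then have "(\<alpha> - \<gamma>)\<^sup>2 \<le> \<beta>\<^sup>2"
    by (metis power2_abs power_mono abs_ge_zero)
  moreover have "\<beta>\<^sup>2 \<le> (\<alpha> + \<gamma>)\<^sup>2"
    using assms \<open>0 \<le> \<beta>\<close> by (intro power_mono) auto
  ultimately have bound: "\<bar>\<alpha>\<^sup>2 + \<gamma>\<^sup>2 - \<beta>\<^sup>2\<bar> \<le> 2 * \<alpha> * \<gamma>"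
    by (simp add: abs_le_iff power2_diff power2_sum)
  then have cos_law: "2 * \<alpha> * u = \<alpha>\<^sup>2 + \<gamma>\<^sup>2 - \<beta>\<^sup>2"
    by (cases "\<alpha> = 0") (simp_all add: u_def)
  have "\<bar>u\<bar> \<le> \<gamma>"
    using assms(1,2) bound by (cases "\<alpha> = 0") (simp_all add: u_def abs_divide divide_le_eq mult.commute)
  then have "u\<^sup>2 \<le> \<gamma>\<^sup>2"
    by (metis abs_ge_zero abs_le_square_iff abs_of_nonneg assms(2))
  define v where "v = sqrt (\<gamma>\<^sup>2 - u\<^sup>2)"
  have v2: "v\<^sup>2 = \<gamma>\<^sup>2 - u\<^sup>2"
    using \<open>u\<^sup>2 \<le> \<gamma>\<^sup>2\<close> by (simp add: v_def)
  have "dist (Complex u v) (complex_of_real \<alpha>) = \<beta>"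
  proof -
    have "(u - \<alpha>)\<^sup>2 + v\<^sup>2 = \<beta>\<^sup>2"
      unfolding power2_diff using v2 cos_law by (simp add: algebra_simps)
    then show ?thesis
      using \<open>0 \<le> \<beta>\<close> by (simp add: dist_norm cmod_def)
  qed
  moreover have "dist (Complex u v) 0 = \<gamma>"
    using v2 assms(2) by (simp add: complex_norm)
  ultimately show ?thesis
    using assms(1) by (intro exI[of _ 0] exI[of _ "of_real \<alpha>"] exI[of _ "Complex u v"])
      (simp add: dist_commute)
qed

lemma comparison_triangle_exists:
  fixes p q r :: "'a::metric_space"
  shows "\<exists>a b c :: complex. dist a b = dist p q \<and> dist b c = dist q r \<and> dist c a = dist r p"
  by (rule complex_triangle_exists) (metis dist_commute dist_triangle add.commute zero_le_dist)+

lemma tri_side_simps [simp]: "tri_side u v w 0 = u" "tri_side u v w 1 = v" "tri_side u v w 2 = w"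
  by (simp_all add: tri_side_def)

lemma geodesic_path_ends: "geodesic_path p q g \<Longrightarrow> g 0 = p \<and> g 1 = q"
  unfolding geodesic_path_def by blast

lemma geo_convex_geodesic_path_mem:
  "geo_convex C \<Longrightarrow> x \<in> C \<Longrightarrow> y \<in> C \<Longrightarrow> geodesic_path x y g \<Longrightarrow> s \<in> {0..1} \<Longrightarrow> g s \<in> C"
  unfolding geo_convex_def by blast

lemma CAT0_geodesic_path_exists: "CAT0 TYPE('a::metric_space) \<Longrightarrow> \<exists>g. geodesic_path (x::'a) y g"
  unfolding CAT0_def geodesic_space_def by blast

lemma CAT0_comparison:
  fixes p q r :: "'a::metric_space" and a b c :: complex
  assumes "CAT0 TYPE('a)" "geodesic_path p q g1" "geodesic_path q r g2" "geodesic_path r p g3"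
    "dist a b = dist p q" "dist b c = dist q r" "dist c a = dist r p"
    "i < 3" "j < 3" "s \<in> {0..1}" "t \<in> {0..1}"
  shows "dist (tri_side g1 g2 g3 i s) (tri_side g1 g2 g3 j t)
           \<le> dist (tri_side (lin_path a b) (lin_path b c) (lin_path c a) i s)
                  (tri_side (lin_path a b) (lin_path b c) (lin_path c a) j t)"
  using assms unfolding CAT0_def by blast

lemma CAT0_CN_inequality:
  fixes p q x :: "'a::metric_space"
  assumes cat: "CAT0 TYPE('a)" and g: "geodesic_path p q g" and t: "t \<in> {0..1}"
  shows "(dist x (g t))\<^sup>2 \<le> (1 - t) * (dist x p)\<^sup>2 + t * (dist x q)\<^sup>2 - t * (1 - t) * (dist p q)\<^sup>2"
proof -
  obtain g2 g3 where g2: "geodesic_path q x g2" and g3: "geodesic_path x p g3"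
    using CAT0_geodesic_path_exists[OF cat] by metis
  obtain a b c :: complex where abc: "dist a b = dist p q" "dist b c = dist q x" "dist c a = dist x p"
    using comparison_triangle_exists by blast
  have "dist (tri_side g g2 g3 0 t) (tri_side g g2 g3 2 0)
          \<le> dist (tri_side (lin_path a b) (lin_path b c) (lin_path c a) 0 t)
                 (tri_side (lin_path a b) (lin_path b c) (lin_path c a) 2 0)"
    by (rule CAT0_comparison[OF cat g g2 g3 abc]) (use t in auto)
  then have "dist x (g t) \<le> dist (lin_path a b t) c"
    using geodesic_path_ends[OF g3] by (simp add: lin_path_def dist_commute)
  then have "(dist x (g t))\<^sup>2 \<le> (dist (lin_path a b t) c)\<^sup>2"
    by (simp add: power_mono)
  also have "lin_path a b t - c = (1 - t) *\<^sub>R (a - c) + t *\<^sub>R (b - c)"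
    by (simp add: lin_path_def scaleR_conv_of_real algebra_simps)
  then have "(dist (lin_path a b t) c)\<^sup>2
               = (1 - t) * (norm (a - c))\<^sup>2 + t * (norm (b - c))\<^sup>2 - t * (1 - t) * (norm (a - b))\<^sup>2"
    by (simp add: dist_norm norm_scaleR_combination_squared)
  also have "\<dots> = (1 - t) * (dist x p)\<^sup>2 + t * (dist x q)\<^sup>2 - t * (1 - t) * (dist p q)\<^sup>2"
    using abc by (simp add: dist_norm norm_minus_commute dist_commute)
  finally show ?thesis .
qed

lemma CAT0_dist_geodesic_paths_le:
  fixes p q r :: "'a::metric_space"
  assumes cat: "CAT0 TYPE('a)" and g1: "geodesic_path p q g1" and g3: "geodesic_path r p g3"
    and t: "t \<in> {0..1}"
  shows "dist (g1 t) (g3 (1 - t)) \<le> t * dist q r"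
proof -
  obtain g2 where g2: "geodesic_path q r g2"
    using CAT0_geodesic_path_exists[OF cat] by blast
  obtain a b c :: complex where abc: "dist a b = dist p q" "dist b c = dist q r" "dist c a = dist r p"
    using comparison_triangle_exists by blast
  have "dist (tri_side g1 g2 g3 0 t) (tri_side g1 g2 g3 2 (1 - t))
          \<le> dist (tri_side (lin_path a b) (lin_path b c) (lin_path c a) 0 t)
                 (tri_side (lin_path a b) (lin_path b c) (lin_path c a) 2 (1 - t))"
    by (rule CAT0_comparison[OF cat g1 g2 g3 abc]) (use t in auto)
  moreover have "lin_path a b t - lin_path c a (1 - t) = of_real t * (b - c)"
    by (simp add: lin_path_def algebra_simps)
  then have "dist (lin_path a b t) (lin_path c a (1 - t)) = t * dist q r"
    using t abc by (simp add: dist_norm norm_mult)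
  ultimately show ?thesis by simp
qed

lemma CAT0_dist_sq_le_midpoint_bound:
  fixes x c c' :: "'a::metric_space"
  assumes cat: "CAT0 TYPE('a)" and conv: "geo_convex C" and "c \<in> C" "c' \<in> C"
    and low: "\<forall>y\<in>C. \<delta> \<le> dist x y" and "0 \<le> \<delta>"
  shows "(dist c c')\<^sup>2 \<le> 2 * (dist x c)\<^sup>2 + 2 * (dist x c')\<^sup>2 - 4 * \<delta>\<^sup>2"
proof -
  obtain g where g: "geodesic_path c c' g"
    using CAT0_geodesic_path_exists[OF cat] by blast
  have "g (1/2) \<in> C"
    using geo_convex_geodesic_path_mem[OF conv \<open>c \<in> C\<close> \<open>c' \<in> C\<close> g] by simp
  then have "\<delta>\<^sup>2 \<le> (dist x (g (1/2)))\<^sup>2"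
    using low \<open>0 \<le> \<delta>\<close> by (simp add: power_mono)
  also have "\<dots> \<le> (1 - 1/2) * (dist x c)\<^sup>2 + (1/2) * (dist x c')\<^sup>2 - (1/2) * (1 - 1/2) * (dist c c')\<^sup>2"
    by (rule CAT0_CN_inequality[OF cat g]) simp
  finally show ?thesis by simp
qed

lemma CAT0_minimising_sequence_Cauchy:
  fixes x :: "'a::metric_space"
  assumes cat: "CAT0 TYPE('a)" and conv: "geo_convex C" and s: "\<And>n. s n \<in> C"
    and lim: "(\<lambda>n. dist x (s n)) \<longlonglongrightarrow> infdist x C"
  shows "Cauchy s"
proof (rule metric_CauchyI)
  fix e :: real assume "0 < e"
  define \<delta> where "\<delta> = infdist x C"
  have low: "\<forall>y\<in>C. \<delta> \<le> dist x y"
    by (simp add: \<delta>_def infdist_le)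
  have excess: "(\<lambda>n. (dist x (s n))\<^sup>2 - \<delta>\<^sup>2) \<longlonglongrightarrow> \<delta>\<^sup>2 - \<delta>\<^sup>2"
    unfolding \<delta>_def by (intro tendsto_intros lim)
  have "\<forall>\<^sub>F n in sequentially. (dist x (s n))\<^sup>2 - \<delta>\<^sup>2 < e\<^sup>2 / 4"
    using order_tendstoD(2)[OF excess, of "e\<^sup>2 / 4"] \<open>0 < e\<close> by simp
  then obtain N where N: "\<And>n. n \<ge> N \<Longrightarrow> (dist x (s n))\<^sup>2 - \<delta>\<^sup>2 < e\<^sup>2 / 4"
    unfolding eventually_sequentially by blast
  have "dist (s m) (s n) < e" if "m \<ge> N" "n \<ge> N" for m n
  proof -
    have "(dist (s m) (s n))\<^sup>2 \<le> 2 * (dist x (s m))\<^sup>2 + 2 * (dist x (s n))\<^sup>2 - 4 * \<delta>\<^sup>2"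
      using CAT0_dist_sq_le_midpoint_bound[OF cat conv s s low] by (simp add: \<delta>_def infdist_nonneg)
    also have "\<dots> < e\<^sup>2"
      using N[OF \<open>m \<ge> N\<close>] N[OF \<open>n \<ge> N\<close>] by simp
    finally show ?thesis
      using \<open>0 < e\<close> by (simp add: power_less_imp_less_base)
  qed
  then show "\<exists>N. \<forall>m\<ge>N. \<forall>n\<ge>N. dist (s m) (s n) < e" by blast
qed

lemma CAT0_nearest_point_exists:
  fixes C :: "'a::complete_space set"
  assumes cat: "CAT0 TYPE('a)" and conv: "geo_convex C" and "closed C" "C \<noteq> {}"
  shows "\<exists>p\<in>C. \<forall>c\<in>C. dist x p \<le> dist x c"
proof -
  have "\<exists>c\<in>C. dist x c < infdist x C + inverse (real (Suc n))" for n
  proof -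
    have "(INF a\<in>C. dist x a) < infdist x C + inverse (real (Suc n))"
      using infdist_notempty[OF \<open>C \<noteq> {}\<close>, of x] by simp
    moreover have "bdd_below (dist x ` C)"
      by (rule bdd_belowI[of _ 0]) auto
    ultimately show ?thesis
      using cINF_less_iff[OF \<open>C \<noteq> {}\<close>] by blast
  qed
  then obtain s where s: "\<And>n. s n \<in> C" "\<And>n. dist x (s n) < infdist x C + inverse (real (Suc n))"
    by metis
  have lim: "(\<lambda>n. dist x (s n)) \<longlonglongrightarrow> infdist x C"
  proof (rule real_tendsto_sandwich[where f = "\<lambda>_. infdist x C"])
    show "(\<lambda>n. infdist x C + inverse (real (Suc n))) \<longlonglongrightarrow> infdist x C"
      using tendsto_add[OF tendsto_const LIMSEQ_inverse_real_of_nat] by simp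
  qed (intro tendsto_const always_eventually allI infdist_le s(1) less_imp_le[OF s(2)])+
  obtain l where l: "s \<longlonglongrightarrow> l"
    using CAT0_minimising_sequence_Cauchy[OF cat conv s(1) lim] Cauchy_convergent_iff convergent_def
    by blast
  have "l \<in> C"
    using \<open>closed C\<close> l s(1) closed_sequentially by blast
  moreover have "dist x l = infdist x C"
    using LIMSEQ_unique[OF tendsto_dist[OF tendsto_const l] lim] .
  ultimately show ?thesis
    by (metis infdist_le)
qed

lemma CAT0_nearest_point_unique:
  fixes x p p' :: "'a::metric_space"
  assumes cat: "CAT0 TYPE('a)" and conv: "geo_convex C"
    and p: "p \<in> C" "\<forall>c\<in>C. dist x p \<le> dist x c"
    and p': "p' \<in> C" "\<forall>c\<in>C. dist x p' \<le> dist x c"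
  shows "p = p'"
proof -
  have "dist x p = dist x p'"
    using p p' by (meson order_antisym)
  then have "(dist p p')\<^sup>2 \<le> 0"
    using CAT0_dist_sq_le_midpoint_bound[OF cat conv p(1) p'(1) p(2)] by simp
  then show ?thesis by simp
qed

lemma CAT0_metric_proj:
  fixes C :: "'a::complete_space set"
  assumes "CAT0 TYPE('a)" "geo_convex C" "closed C" "C \<noteq> {}"
  shows "metric_proj C x \<in> C" "\<forall>c\<in>C. dist x (metric_proj C x) \<le> dist x c"
proof -
  have "\<exists>!p. p \<in> C \<and> (\<forall>c\<in>C. dist x p \<le> dist x c)"
    using CAT0_nearest_point_exists[OF assms] CAT0_nearest_point_unique[OF assms(1,2)] by blast
  then have "metric_proj C x \<in> C \<and> (\<forall>c\<in>C. dist x (metric_proj C x) \<le> dist x c)"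
    unfolding metric_proj_def by (rule theI')
  then show "metric_proj C x \<in> C" "\<forall>c\<in>C. dist x (metric_proj C x) \<le> dist x c"
    by auto
qed

text \<open>The first-order optimality condition of the nearest point \<open>p\<close>: compare \<open>p\<close> with the point
  \<open>g\<^sub>3 (1 - t) \<in> C\<close> on the geodesic from \<open>q\<close> to \<open>p\<close>, which is within \<open>t d(y,q)\<close> of the point \<open>g\<^sub>1 t\<close>
  on the geodesic from \<open>p\<close> to \<open>y\<close>, expand with the CN inequality and let \<open>t \<rightarrow> 0\<^sup>+\<close>.\<close>
lemma CAT0_nearest_point_dist_sq_le:
  fixes x y p q :: "'a::metric_space"
  assumes cat: "CAT0 TYPE('a)" and conv: "geo_convex C" and "p \<in> C" "q \<in> C"
    and nearest: "\<forall>c\<in>C. dist x p \<le> dist x c"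
  shows "(dist p y)\<^sup>2 \<le> (dist x y)\<^sup>2 - (dist x p)\<^sup>2 + 2 * dist x p * dist y q"
proof (cases "x = p")
  case False
  define a b D h where "a = dist x p" and "b = dist x y" and "D = dist p y" and "h = dist y q"
  obtain g1 g3 where g1: "geodesic_path p y g1" and g3: "geodesic_path q p g3"
    using CAT0_geodesic_path_exists[OF cat] by metis
  have step: "D\<^sup>2 \<le> b\<^sup>2 - a\<^sup>2 + 2 * a * h + t * D\<^sup>2" if t: "0 < t" "t < 1" "t * h < a" for t
  proof -
    have "g3 (1 - t) \<in> C"
      using geo_convex_geodesic_path_mem[OF conv \<open>q \<in> C\<close> \<open>p \<in> C\<close> g3] t by simp
    then have "a \<le> dist x (g3 (1 - t))"
      using nearest by (simp add: a_def)
    also have "\<dots> \<le> dist x (g1 t) + dist (g1 t) (g3 (1 - t))"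
      by (rule dist_triangle)
    also have "\<dots> \<le> dist x (g1 t) + t * h"
      using CAT0_dist_geodesic_paths_le[OF cat g1 g3] t by (simp add: h_def dist_commute)
    finally have "(a - t * h)\<^sup>2 \<le> (dist x (g1 t))\<^sup>2"
      using t by (simp add: power_mono)
    also have "\<dots> \<le> (1 - t) * a\<^sup>2 + t * b\<^sup>2 - t * (1 - t) * D\<^sup>2"
      using CAT0_CN_inequality[OF cat g1, of t x] t by (simp add: a_def b_def D_def)
    finally have "t * D\<^sup>2 \<le> t * (b\<^sup>2 - a\<^sup>2 + 2 * a * h + t * D\<^sup>2 - t * h\<^sup>2)"
      by (simp add: power2_eq_square algebra_simps)
    then have "D\<^sup>2 \<le> b\<^sup>2 - a\<^sup>2 + 2 * a * h + t * D\<^sup>2 - t * h\<^sup>2"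
      using t by simp
    moreover have "0 \<le> t * h\<^sup>2"
      using t by simp
    ultimately show ?thesis by linarith
  qed
  have "0 < a" using False by (simp add: a_def)
  have "\<forall>\<^sub>F t in at_right 0. t \<in> {0<..<1::real}"
    by (rule eventually_at_right_real) simp
  moreover have "\<forall>\<^sub>F t in at_right 0. t * h < a"
    using order_tendstoD(2)[OF tendsto_mult_left_zero[OF tendsto_ident_at, of h] \<open>0 < a\<close>] .
  ultimately have ev: "\<forall>\<^sub>F t in at_right 0. D\<^sup>2 \<le> b\<^sup>2 - a\<^sup>2 + 2 * a * h + t * D\<^sup>2"
    by eventually_elim (simp add: step)
  have "((\<lambda>t. b\<^sup>2 - a\<^sup>2 + 2 * a * h + t * D\<^sup>2) \<longlongrightarrow> b\<^sup>2 - a\<^sup>2 + 2 * a * h + 0 * D\<^sup>2) (at_right 0)"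
    by (intro tendsto_intros)
  from tendsto_lowerbound[OF this ev trivial_limit_at_right_real] show ?thesis
    by (simp add: a_def b_def D_def h_def)
qed simp

lemma CAT0_nearest_point_dist_sq_le_infdist:
  fixes x y p :: "'a::metric_space"
  assumes "CAT0 TYPE('a)" "geo_convex C" "p \<in> C" "C \<noteq> {}"
    and "\<forall>c\<in>C. dist x p \<le> dist x c"
  shows "(dist p y)\<^sup>2 \<le> (dist x y)\<^sup>2 - (dist x p)\<^sup>2 + 2 * dist x p * infdist y C"
proof (cases "x = p")
  case False
  have "((dist p y)\<^sup>2 - (dist x y)\<^sup>2 + (dist x p)\<^sup>2) / (2 * dist x p) \<le> dist y q" if "q \<in> C" for q
    using CAT0_nearest_point_dist_sq_le[OF assms(1-3) that assms(5), of y] False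
    by (simp add: divide_le_eq algebra_simps)
  then have "((dist p y)\<^sup>2 - (dist x y)\<^sup>2 + (dist x p)\<^sup>2) / (2 * dist x p) \<le> infdist y C"
    unfolding infdist_notempty[OF \<open>C \<noteq> {}\<close>] by (rule cINF_greatest[OF \<open>C \<noteq> {}\<close>])
  then show ?thesis
    using False by (simp add: divide_le_eq algebra_simps)
qed simp

lemma dist_metric_proj_sq_le:
  fixes C1 C2 :: "'a::complete_space set"
  assumes cat: "CAT0 TYPE('a)"
    and C1: "C1 \<noteq> {}" "closed C1" "geo_convex C1"
    and C2: "C2 \<noteq> {}" "closed C2" "geo_convex C2"
  shows "(dist (metric_proj C1 x) (metric_proj C2 x))\<^sup>2
           \<le> dist x (metric_proj C1 x) * infdist (metric_proj C2 x) C1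
             + dist x (metric_proj C2 x) * infdist (metric_proj C1 x) C2"
proof -
  note P1 = CAT0_metric_proj[OF cat C1(3,2,1), of x]
  note P2 = CAT0_metric_proj[OF cat C2(3,2,1), of x]
  show ?thesis
    using CAT0_nearest_point_dist_sq_le_infdist[OF cat C1(3) P1(1) C1(1) P1(2), of "metric_proj C2 x"]
      CAT0_nearest_point_dist_sq_le_infdist[OF cat C2(3) P2(1) C2(1) P2(2), of "metric_proj C1 x"]
    by (simp add: dist_commute)
qed

lemma infdist_le_pompeiu_hausdorff:
  assumes "bounded B" "bounded C" "B \<noteq> {}" "C \<noteq> {}"
  shows "b \<in> B \<Longrightarrow> infdist b C \<le> pompeiu_hausdorff B C"
    and "c \<in> C \<Longrightarrow> infdist c B \<le> pompeiu_hausdorff B C"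
proof -
  have bdd: "bdd_above ((\<lambda>b. infdist b C) ` B)" if "bounded B" "C \<noteq> {}" for B C :: "'a set"
  proof -
    obtain c where "c \<in> C" using \<open>C \<noteq> {}\<close> by blast
    obtain e where e: "\<forall>b\<in>B. dist c b \<le> e"
      using \<open>bounded B\<close> bounded_any_center by blast
    show ?thesis
    proof (rule bdd_aboveI2)
      fix b assume "b \<in> B"
      have "infdist b C \<le> dist b c"
        by (rule infdist_le[OF \<open>c \<in> C\<close>])
      also have "\<dots> \<le> e"
        using e \<open>b \<in> B\<close> by (simp add: dist_commute)
      finally show "infdist b C \<le> e" .
    qed
  qed
  show "b \<in> B \<Longrightarrow> infdist b C \<le> pompeiu_hausdorff B C"
    unfolding pompeiu_hausdorff_def using cSUP_upper[OF _ bdd[OF assms(1,4)]] by fastforce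
  show "c \<in> C \<Longrightarrow> infdist c B \<le> pompeiu_hausdorff B C"
    unfolding pompeiu_hausdorff_def using cSUP_upper[OF _ bdd[OF assms(2,3)]] by fastforce
qed

theorem lemma4p2:
  fixes C1 C2 :: "'a::complete_space set" and r1 r2 :: real and z x :: 'a
  assumes "CAT0 TYPE('a)"
    and "C1 \<noteq> {}" "closed C1" "geo_convex C1"
    and "C2 \<noteq> {}" "closed C2" "geo_convex C2"
    and "r1 > 0" "r2 > 0"
    and "C1 \<subseteq> cball z r1" "C2 \<subseteq> cball z r1"
    and "x \<in> cball z r2"
  shows "(dist (metric_proj C1 x) (metric_proj C2 x))\<^sup>2 \<le> 2 * (r1 + r2) * pompeiu_hausdorff C1 C2"
proof -
  define p1 p2 H where "p1 = metric_proj C1 x" and "p2 = metric_proj C2 x"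
    and "H = pompeiu_hausdorff C1 C2"
  have "p1 \<in> C1" "p2 \<in> C2"
    using CAT0_metric_proj(1) assms(1-7) by (auto simp: p1_def p2_def)
  have "bounded C1" "bounded C2"
    using assms(10,11) bounded_cball bounded_subset by blast+
  then have H1: "infdist p2 C1 \<le> H" and H2: "infdist p1 C2 \<le> H"
    using infdist_le_pompeiu_hausdorff[OF _ _ assms(2,5)] \<open>p1 \<in> C1\<close> \<open>p2 \<in> C2\<close>
    by (simp_all add: H_def)
  have "dist x p \<le> r1 + r2" if "p \<in> cball z r1" for p
    using that assms(12) dist_triangle[of x p z] by (simp add: dist_commute)
  then have R1: "dist x p1 \<le> r1 + r2" and R2: "dist x p2 \<le> r1 + r2"
    using \<open>p1 \<in> C1\<close> \<open>p2 \<in> C2\<close> assms(10,11) by blast+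
  have "(dist p1 p2)\<^sup>2 \<le> dist x p1 * infdist p2 C1 + dist x p2 * infdist p1 C2"
    using dist_metric_proj_sq_le[OF assms(1-7)] by (simp add: p1_def p2_def)
  also have "\<dots> \<le> (r1 + r2) * H + (r1 + r2) * H"
    using R1 R2 H1 H2 assms(8,9) by (intro add_mono mult_mono) (simp_all add: infdist_nonneg)
  finally show ?thesis by (simp add: p1_def p2_def H_def algebra_simps)
qed

end
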